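(* Let $p\in B(\mathcal H)$ be selfadjoint and suppose that for every $\omega\in\{\omega_-,\omega_+,\omega_1,\dots,\omega_{N-1}\}$, $$L_{-,\omega}\,p=p\,L_{-,\omega}\,p\qquad\text{and}\qquad L_{-,\omega}^*\,p=p\,L_{-,\omega}^*\,p.$$ Then $p$ is harmonic for $(\mathcal T_t^* )_{t\ge0}$.
   Context: Fix integers $N\ge 2$ and $n_1\ge n_2\ge\dots\ge n_N\ge 1$. Let $\mathcal H$ be a finite-dimensional complex Hilbert space with orthonormal basis $\{|-\rangle,|+\rangle\}\cup\{|a_k\rangle:1\le k\le N,\ 0\le a\le n_k-1\}$. For vectors $x,y$, $|x\rangle\langle y|$ denotes the operator $u\mapsto\langle y,u\rangle x$. Put $E_k=\mathrm{span}\{|a_k\rangle:0\le a\le n_k-1\}$, $P_k$ the orthogonal projection onto $E_k$, $P_\pm=|\pm\rangle\langle\pm|$, $\zeta_k=e^{2\pi i/n_k}$, and $\varphi_{a_k}=n_k^{-1/2}\sum_{b=0}^{n_k-1}\zeta_k^{-ba}|b_k\rangle$. For $1\le k\le N-1$ let $Z_k=n_k^{-1/2}\sum_{b=0}^{n_{k+1}-1}\sum_{a=0}^{n_k-1}\zeta_k^{ba}|b_{k+1}\rangle\langle a_k|$, $|Z|_k=Z_k^*Z_k$. Let $\omega$ range over $\{\omega_+,\omega_-,\omega_1,\dots,\omega_{N-1}\}$ and let $\Gamma_{\pm,\omega}>0$, $\gamma_{\pm,\omega}\in\mathbb R$ be constants. Kraus operators: $L_{-,\omega_+}=\sqrt{n_1\Gamma_{-,\omega_+}}|\varphi_{0_1}\rangle\langle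 +|$, $L_{+,\omega_+}=\sqrt{n_1\Gamma_{+,\omega_+}}|+\rangle\langle\varphi_{0_1}|$, $L_{-,\omega_k}=\sqrt{\Gamma_{-,\omega_k}}Z_k$, $L_{+,\omega_k}=\sqrt{\Gamma_{+,\omega_k}}Z_k^*$, $L_{-,\omega_-}=\sqrt{\Gamma_{-,\omega_-}}|-\rangle\langle\varphi_{0_N}|$, $L_{+,\omega_-}=0$. $H_{\mathrm{eff}}=n_1\gamma_{-,\omega_+}P_+-n_1\gamma_{+,\omega_+}|\varphi_{0_1}\rangle\langle\varphi_{0_1}|+\gamma_{-,\omega_-}|\varphi_{0_N}\rangle\langle\varphi_{0_N}|-\gamma_{+,\omega_-}P_-+\sum_{k=1}^{N-1}(\gamma_{-,\omega_k}|Z|_k-\gamma_{+,\omega_k}P_{k+1})$. The dual generator is $\mathcal L^*(x)=i[H_{\mathrm{eff}},x]+\sum_{\omega}\sum_{\epsilon=\pm}\big(L_{\epsilon,\omega}^*xL_{\epsilon,\omega}-\tfrac12\{L_{\epsilon,\omega}^*L_{\epsilon,\omega},x\}\big)$ and $\mathcal T_t^*=e^{t\mathcal L^*}$. A selfadjoint $p$ is harmonic if $\mathcal T_t^*(p)=p$ for all $t\ge0$. *)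

theory Defs
  imports Complex_Main
begin

text \<open>Basis labels: Mn = |->, Pl = |+>, B k a = |a_k>.  Operators on H are
  represented as complex matrices indexed by labels, supported on the valid
  label set Idx N n.\<close>

datatype idx = Mn | Pl | B nat nat

text \<open>Bohr frequencies: OPl = omega_+, OMi = omega_-, OK k = omega_k.\<close>
datatype om = OPl | OMi | OK nat

type_synonym cmat = "idx \<Rightarrow> idx \<Rightarrow> complex"
type_synonym cvec = "idx \<Rightarrow> complex"

definition Idx :: "nat \<Rightarrow> (nat \<Rightarrow> nat) \<Rightarrow> idx set" where
  "Idx N n = {Mn, Pl} \<union> {B k a | k a. 1 \<le> k \<and> k \<le> N \<and> a < n k}"

definition Om :: "nat \<Rightarrow> om set" where
  "Om N = {OPl, OMi} \<union> OK ` {1..<N}"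

definition mmul :: "idx set \<Rightarrow> cmat \<Rightarrow> cmat \<Rightarrow> cmat" where
  "mmul I A X = (\<lambda>i j. \<Sum>l\<in>I. A i l * X l j)"

definition adj :: "cmat \<Rightarrow> cmat" where
  "adj A = (\<lambda>i j. cnj (A j i))"

definition scal :: "complex \<Rightarrow> cmat \<Rightarrow> cmat" where
  "scal c A = (\<lambda>i j. c * A i j)"

text \<open>outer x y = |x><y|, with <y,u> antilinear in y.\<close>
definition outer :: "cvec \<Rightarrow> cvec \<Rightarrow> cmat" where
  "outer x y = (\<lambda>i j. x i * cnj (y j))"

definition ket :: "idx \<Rightarrow> cvec" where
  "ket b = (\<lambda>i. if i = b then 1 else 0)"

definition zeta :: "(nat \<Rightarrow> nat) \<Rightarrow> nat \<Rightarrow> complex" where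
  "zeta n k = exp (2 * complex_of_real pi * \<i> / of_nat (n k))"

definition phi :: "(nat \<Rightarrow> nat) \<Rightarrow> nat \<Rightarrow> nat \<Rightarrow> cvec" where
  "phi n k a = (\<lambda>i. case i of
      B k' b \<Rightarrow> if k' = k \<and> b < n k
                 then inverse (zeta n k ^ (b * a)) / complex_of_real (sqrt (real (n k)))
                 else 0
    | _ \<Rightarrow> 0)"

definition Zop :: "(nat \<Rightarrow> nat) \<Rightarrow> nat \<Rightarrow> cmat" where
  "Zop n k = (\<lambda>i j. case (i, j) of
      (B k1 b, B k0 a) \<Rightarrow> if k1 = Suc k \<and> k0 = k \<and> b < n (Suc k) \<and> a < n k
                          then zeta n k ^ (b * a) / complex_of_real (sqrt (real (n k)))
                          else 0
    | _ \<Rightarrow> 0)"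

definition Pk :: "(nat \<Rightarrow> nat) \<Rightarrow> nat \<Rightarrow> cmat" where
  "Pk n k = (\<lambda>i j. if i = j \<and> (\<exists>a < n k. i = B k a) then 1 else 0)"

definition Pproj :: "idx \<Rightarrow> cmat" where
  "Pproj b = outer (ket b) (ket b)"

fun Lm :: "nat \<Rightarrow> (nat \<Rightarrow> nat) \<Rightarrow> (om \<Rightarrow> real) \<Rightarrow> om \<Rightarrow> cmat" where
  "Lm N n Gm OPl = scal (complex_of_real (sqrt (real (n 1) * Gm OPl))) (outer (phi n 1 0) (ket Pl))"
| "Lm N n Gm (OK k) = scal (complex_of_real (sqrt (Gm (OK k)))) (Zop n k)"
| "Lm N n Gm OMi = scal (complex_of_real (sqrt (Gm OMi))) (outer (ket Mn) (phi n N 0))"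

fun Lp :: "nat \<Rightarrow> (nat \<Rightarrow> nat) \<Rightarrow> (om \<Rightarrow> real) \<Rightarrow> om \<Rightarrow> cmat" where
  "Lp N n Gp OPl = scal (complex_of_real (sqrt (real (n 1) * Gp OPl))) (outer (ket Pl) (phi n 1 0))"
| "Lp N n Gp (OK k) = scal (complex_of_real (sqrt (Gp (OK k)))) (adj (Zop n k))"
| "Lp N n Gp OMi = (\<lambda>i j. 0)"

definition Heff :: "nat \<Rightarrow> (nat \<Rightarrow> nat) \<Rightarrow> (om \<Rightarrow> real) \<Rightarrow> (om \<Rightarrow> real) \<Rightarrow> cmat" where
  "Heff N n gm gp = (\<lambda>i j.
      complex_of_real (real (n 1) * gm OPl) * Pproj Pl i j
    - complex_of_real (real (n 1) * gp OPl) * outer (phi n 1 0) (phi n 1 0) i j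
    + complex_of_real (gm OMi) * outer (phi n N 0) (phi n N 0) i j
    - complex_of_real (gp OMi) * Pproj Mn i j
    + (\<Sum>k\<in>{1..<N}. complex_of_real (gm (OK k)) * mmul (Idx N n) (adj (Zop n k)) (Zop n k) i j
                   - complex_of_real (gp (OK k)) * Pk n (Suc k) i j))"

definition Diss :: "idx set \<Rightarrow> cmat \<Rightarrow> cmat \<Rightarrow> cmat" where
  "Diss I L x = (\<lambda>i j. mmul I (mmul I (adj L) x) L i j
      - (mmul I (mmul I (adj L) L) x i j + mmul I x (mmul I (adj L) L) i j) / 2)"

definition Lstar :: "nat \<Rightarrow> (nat \<Rightarrow> nat) \<Rightarrow> (om \<Rightarrow> real) \<Rightarrow> (om \<Rightarrow> real)
    \<Rightarrow> (om \<Rightarrow> real) \<Rightarrow> (om \<Rightarrow> real) \<Rightarrow> cmat \<Rightarrow> cmat" where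
  "Lstar N n Gm Gp gm gp x = (\<lambda>i j.
      \<i> * (mmul (Idx N n) (Heff N n gm gp) x i j - mmul (Idx N n) x (Heff N n gm gp) i j)
    + (\<Sum>w\<in>Om N. Diss (Idx N n) (Lm N n Gm w) x i j + Diss (Idx N n) (Lp N n Gp w) x i j))"

definition Tstar :: "nat \<Rightarrow> (nat \<Rightarrow> nat) \<Rightarrow> (om \<Rightarrow> real) \<Rightarrow> (om \<Rightarrow> real)
    \<Rightarrow> (om \<Rightarrow> real) \<Rightarrow> (om \<Rightarrow> real) \<Rightarrow> real \<Rightarrow> cmat \<Rightarrow> cmat" where
  "Tstar N n Gm Gp gm gp t x = (\<lambda>i j.
      \<Sum>m. complex_of_real (t ^ m / fact m) * ((Lstar N n Gm Gp gm gp ^^ m) x) i j)"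

definition harmonic :: "nat \<Rightarrow> (nat \<Rightarrow> nat) \<Rightarrow> (om \<Rightarrow> real) \<Rightarrow> (om \<Rightarrow> real)
    \<Rightarrow> (om \<Rightarrow> real) \<Rightarrow> (om \<Rightarrow> real) \<Rightarrow> cmat \<Rightarrow> bool" where
  "harmonic N n Gm Gp gm gp p \<longleftrightarrow> (\<forall>t\<ge>0. Tstar N n Gm Gp gm gp t p = p)"

end

theory Submission
  imports Defs "HOL-Analysis.Analysis"
begin

text \<open>Since p is selfadjoint, the two conditions on L = L_{-,w} (and its adjoint) imply
  that p commutes with L and L^*.  Each L_{+,w} is a real multiple of L_{-,w}^*
  or zero, and every summand of H_eff is a real multiple of L^* L or L L^* for some
  L = L_{-,w}: for w_+ and w_- these are rank-one projections, and for w_k one has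
  Z_k^* Z_k = |Z|_k and Z_k Z_k^* = P_{k+1}, the latter by orthogonality of the
  n_k-th roots of unity together with n_{k+1} \<le> n_k.  Hence p commutes with H_eff
  and with all Kraus operators, so every dissipator and the Hamiltonian commutator
  vanish at p.  The generator thus annihilates p, and the exponential series defining
  T_t^* reduces to its constant term.\<close>

lemma mmul_assoc: "mmul I (mmul I X Y) Z = mmul I X (mmul I Y Z)"
proof (intro ext)
  fix i j
  have "(\<Sum>l\<in>I. (\<Sum>m\<in>I. X i m * Y m l) * Z l j) = (\<Sum>l\<in>I. \<Sum>m\<in>I. X i m * Y m l * Z l j)"
    by (simp add: sum_distrib_right)
  also have "\<dots> = (\<Sum>m\<in>I. \<Sum>l\<in>I. X i m * Y m l * Z l j)"
    by (rule sum.swap)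
  also have "\<dots> = (\<Sum>m\<in>I. X i m * (\<Sum>l\<in>I. Y m l * Z l j))"
    by (simp add: sum_distrib_left mult.assoc)
  finally show "mmul I (mmul I X Y) Z i j = mmul I X (mmul I Y Z) i j"
    by (simp add: mmul_def)
qed

lemma adj_adj [simp]: "adj (adj X) = X"
  by (simp add: adj_def)

lemma adj_mmul: "adj (mmul I X Y) = mmul I (adj Y) (adj X)"
  by (simp add: adj_def mmul_def mult.commute fun_eq_iff)

lemma adj_scal: "adj (scal c X) = scal (cnj c) (adj X)"
  by (simp add: adj_def scal_def fun_eq_iff)

lemma adj_outer: "adj (outer x y) = outer y x"
  by (simp add: adj_def outer_def fun_eq_iff mult.commute)

lemma scal_one [simp]: "scal 1 X = X"
  by (simp add: scal_def)

lemma scal_scal: "scal c (scal d X) = scal (c * d) X"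
  by (simp add: scal_def fun_eq_iff mult.assoc)

lemma mmul_scal_left: "mmul I (scal c X) Y = scal c (mmul I X Y)"
  by (simp add: mmul_def scal_def fun_eq_iff sum_distrib_left mult.assoc)

lemma mmul_scal_right: "mmul I X (scal c Y) = scal c (mmul I X Y)"
  by (simp add: mmul_def scal_def fun_eq_iff sum_distrib_left mult_ac)

lemma mmul_outer: "mmul I (outer x y) (outer u v) = scal (\<Sum>l\<in>I. cnj (y l) * u l) (outer x v)"
  by (simp add: mmul_def outer_def scal_def fun_eq_iff sum_distrib_left sum_distrib_right mult_ac)

lemma mmul_adj_rank_one:
  "mmul I (adj (scal c (outer x y))) (scal c (outer x y))
     = scal (cnj c * c * (\<Sum>l\<in>I. cnj (x l) * x l)) (outer y y)"
  by (simp add: adj_scal adj_outer mmul_scal_left mmul_scal_right mmul_outer scal_scal mult_ac)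

lemma mmul_rank_one_adj:
  "mmul I (scal c (outer x y)) (adj (scal c (outer x y)))
     = scal (cnj c * c * (\<Sum>l\<in>I. cnj (y l) * y l)) (outer x x)"
  by (simp add: adj_scal adj_outer mmul_scal_left mmul_scal_right mmul_outer scal_scal mult_ac)

definition commute :: "idx set \<Rightarrow> cmat \<Rightarrow> cmat \<Rightarrow> bool" where
  "commute I X Y \<longleftrightarrow> mmul I X Y = mmul I Y X"

lemma commute_zero: "commute I p (\<lambda>i j. 0)"
  by (simp add: commute_def mmul_def)

lemma commute_mmul: "commute I p X \<Longrightarrow> commute I p Y \<Longrightarrow> commute I p (mmul I X Y)"
  unfolding commute_def by (metis mmul_assoc)

lemma commute_scal: "commute I p X \<Longrightarrow> commute I p (scal c X)"
  unfolding commute_def by (simp add: mmul_scal_left mmul_scal_right)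

lemma commute_scal_iff: "c \<noteq> 0 \<Longrightarrow> commute I p (scal c X) \<longleftrightarrow> commute I p X"
  using commute_scal[of I p "scal c X" "inverse c"] commute_scal[of I p X c]
  by (auto simp: scal_scal)

lemma commute_cmul: "commute I p X \<Longrightarrow> commute I p (\<lambda>i j. c * X i j)"
  using commute_scal[of I p X c] by (simp add: scal_def)

lemma commute_add: "commute I p X \<Longrightarrow> commute I p Y \<Longrightarrow> commute I p (\<lambda>i j. X i j + Y i j)"
  unfolding commute_def mmul_def by (simp add: fun_eq_iff distrib_left distrib_right sum.distrib)

lemma commute_diff: "commute I p X \<Longrightarrow> commute I p Y \<Longrightarrow> commute I p (\<lambda>i j. X i j - Y i j)"
  unfolding commute_def mmul_def
  by (simp add: fun_eq_iff left_diff_distrib right_diff_distrib sum_subtractf)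

lemma commute_sum:
  assumes "\<And>k. k \<in> K \<Longrightarrow> commute I p (F k)"
  shows "commute I p (\<lambda>i j. \<Sum>k\<in>K. F k i j)"
proof -
  have "mmul I (\<lambda>i j. \<Sum>k\<in>K. F k i j) p = (\<lambda>i j. \<Sum>k\<in>K. mmul I (F k) p i j)"
    by (simp add: mmul_def fun_eq_iff sum_distrib_right sum.swap[of _ I])
  also have "\<dots> = (\<lambda>i j. \<Sum>k\<in>K. mmul I p (F k) i j)"
    using assms unfolding commute_def by (simp add: fun_eq_iff)
  also have "\<dots> = mmul I p (\<lambda>i j. \<Sum>k\<in>K. F k i j)"
    by (simp add: mmul_def fun_eq_iff sum_distrib_left sum.swap[of _ I])
  finally show ?thesis
    unfolding commute_def ..
qed

lemma commute_adj: "adj p = p \<Longrightarrow> commute I p X \<Longrightarrow> commute I p (adj X)"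
  unfolding commute_def by (metis adj_mmul)

lemma commute_if_reducing:
  assumes "adj p = p"
    and "mmul I L p = mmul I p (mmul I L p)"
    and "mmul I (adj L) p = mmul I p (mmul I (adj L) p)"
  shows "commute I p L"
proof -
  have "mmul I p L = adj (mmul I (adj L) p)"
    using assms(1) by (simp add: adj_mmul)
  also have "\<dots> = adj (mmul I p (mmul I (adj L) p))"
    using assms(3) by simp
  also have "\<dots> = mmul I (mmul I p L) p"
    using assms(1) by (simp add: adj_mmul)
  also have "\<dots> = mmul I L p"
    using assms(2) by (simp add: mmul_assoc)
  finally show ?thesis
    unfolding commute_def by simp
qed

lemma Diss_eq_zero_if_commute:
  assumes "commute I p L" and "commute I p (adj L)"
  shows "Diss I L p = (\<lambda>i j. 0)"
proof -
  have "mmul I (mmul I (adj L) p) L = mmul I p (mmul I (adj L) L)"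
    using assms(2) unfolding commute_def by (metis mmul_assoc)
  moreover have "mmul I (mmul I (adj L) L) p = mmul I p (mmul I (adj L) L)"
    using commute_mmul[OF assms(2,1)] unfolding commute_def by simp
  ultimately show ?thesis
    unfolding Diss_def by (simp add: fun_eq_iff)
qed

lemma Lstar_zero: "Lstar N n Gm Gp gm gp (\<lambda>i j. 0) = (\<lambda>i j. 0)"
  by (simp add: Lstar_def mmul_def Diss_def)

lemma harmonic_if_Lstar_eq_zero:
  assumes "Lstar N n Gm Gp gm gp p = (\<lambda>i j. 0)"
  shows "harmonic N n Gm Gp gm gp p"
  unfolding harmonic_def
proof (intro allI impI ext)
  fix t :: real and i j
  let ?L = "Lstar N n Gm Gp gm gp"
  have "(?L ^^ Suc m) p = (\<lambda>i j. 0)" for m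
    by (induction m) (simp_all add: funpow_Suc_right assms Lstar_zero del: funpow.simps(2))
  then have "(\<lambda>m. complex_of_real (t ^ m / fact m) * (?L ^^ m) p i j) = (\<lambda>m. if m = 0 then p i j else 0)"
    by (auto simp: fun_eq_iff gr0_conv_Suc)
  moreover have "(\<lambda>m. if m = 0 then p i j else 0) sums p i j"
    using sums_single[of 0 "\<lambda>_. p i j"] by simp
  ultimately show "Tstar N n Gm Gp gm gp t p i j = p i j"
    unfolding Tstar_def by (simp add: sums_iff)
qed

lemma zeta_power: "zeta n k ^ m = exp (2 * complex_of_real pi * \<i> * of_nat m / of_nat (n k))"
  unfolding zeta_def by (simp add: exp_of_nat_mult[symmetric] mult_ac)

lemma cnj_zeta_mult_zeta: "cnj (zeta n k) * zeta n k = 1"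
proof -
  have "cnj (zeta n k) = exp (- (2 * complex_of_real pi * \<i> / of_nat (n k)))"
    unfolding zeta_def by (simp add: exp_cnj)
  then show ?thesis
    unfolding zeta_def by (simp add: exp_add[symmetric])
qed

lemma zeta_orthogonality:
  assumes "n k \<ge> 1" "b < n k" "b' < n k"
  shows "(\<Sum>a<n k. zeta n k ^ (b * a) * cnj (zeta n k ^ (b' * a))) = (if b = b' then of_nat (n k) else 0)"
proof -
  define z where "z = zeta n k"
  define w where "w = z ^ b * cnj z ^ b'"
  have cnj_z: "cnj z * z = 1"
    unfolding z_def by (rule cnj_zeta_mult_zeta)
  have "z ^ n k = 1"
    unfolding z_def zeta_power using assms(1) by simp
  then have "cnj z ^ n k = 1"
    by (metis complex_cnj_one complex_cnj_power)
  with \<open>z ^ n k = 1\<close> have w_root: "w ^ n k = 1"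
    by (simp add: w_def power_mult_distrib power_mult[symmetric] mult.commute[of _ "n k"] power_mult)
  have "z ^ (b * a) * cnj (z ^ (b' * a)) = w ^ a" for a
    by (simp add: w_def power_mult power_mult_distrib mult.commute power_commutes flip: power_mult)
  then have "(\<Sum>a<n k. zeta n k ^ (b * a) * cnj (zeta n k ^ (b' * a))) = (\<Sum>a<n k. w ^ a)"
    by (simp add: z_def)
  also have "\<dots> = (if b = b' then of_nat (n k) else 0)"
  proof (cases "b = b'")
    case True
    then have "w = (cnj z * z) ^ b"
      by (simp add: w_def power_mult_distrib mult.commute)
    then show ?thesis
      using True cnj_z by simp
  next
    case False
    have "w \<noteq> 1"
    proof
      assume "w = 1"
      moreover have "w * z ^ b' = z ^ b * (cnj z * z) ^ b'"
        by (simp add: w_def power_mult_distrib mult_ac)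
      ultimately have "z ^ b = z ^ b'"
        using cnj_z by simp
      then have "b mod n k = b' mod n k"
        unfolding z_def zeta_power using complex_root_unity_eq[OF assms(1)] by simp
      then show False
        using assms False by simp
    qed
    then show ?thesis
      using False by (simp add: geometric_sum w_root)
  qed
  finally show ?thesis .
qed

lemma finite_Idx: "finite (Idx N n)"
proof (rule finite_subset)
  show "Idx N n \<subseteq> {Mn, Pl} \<union> (\<lambda>(k, a). B k a) ` (SIGMA k:{1..N}. {..<n k})"
    unfolding Idx_def by auto
qed auto

lemma Pl_in_Idx: "Pl \<in> Idx N n" and Mn_in_Idx: "Mn \<in> Idx N n"
  unfolding Idx_def by auto

lemma block_subset_Idx: "1 \<le> k \<Longrightarrow> k \<le> N \<Longrightarrow> B k ` {..<n k} \<subseteq> Idx N n"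
  unfolding Idx_def by auto

lemma sum_Idx_block:
  assumes "1 \<le> k" "k \<le> N" and "\<And>l. l \<in> Idx N n \<Longrightarrow> l \<notin> B k ` {..<n k} \<Longrightarrow> f l = 0"
  shows "(\<Sum>l\<in>Idx N n. f l) = (\<Sum>a<n k. f (B k a))"
proof -
  have "(\<Sum>l\<in>Idx N n. f l) = (\<Sum>l\<in>B k ` {..<n k}. f l)"
    using assms finite_Idx block_subset_Idx by (intro sum.mono_neutral_right) auto
  also have "\<dots> = (\<Sum>a<n k. f (B k a))"
    by (subst sum.reindex) (auto simp: inj_on_def)
  finally show ?thesis .
qed

lemma ket_inner_self: "b \<in> I \<Longrightarrow> finite I \<Longrightarrow> (\<Sum>l\<in>I. cnj (ket b l) * ket b l) = 1"
  by (simp add: ket_def if_distrib cong: if_cong)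

lemma phi_inner_self:
  assumes "1 \<le> k" "k \<le> N" "n k \<ge> 1"
  shows "(\<Sum>l\<in>Idx N n. cnj (phi n k a l) * phi n k a l) = 1"
proof -
  let ?s = "complex_of_real (sqrt (real (n k)))"
  have "(\<Sum>l\<in>Idx N n. cnj (phi n k a l) * phi n k a l)
      = (\<Sum>b<n k. cnj (phi n k a (B k b)) * phi n k a (B k b))"
  proof (rule sum_Idx_block[OF assms(1,2)])
    fix l
    assume "l \<notin> B k ` {..<n k}"
    then show "cnj (phi n k a l) * phi n k a l = 0"
      by (cases l) (auto simp: phi_def)
  qed
  also have "\<dots> = (\<Sum>b<n k. 1 / of_nat (n k))"
  proof (rule sum.cong)
    fix b
    assume "b \<in> {..<n k}"
    then have "cnj (phi n k a (B k b)) * phi n k a (B k b)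
        = inverse ((cnj (zeta n k) * zeta n k) ^ (b * a)) / (?s * ?s)"
      by (simp add: phi_def power_mult_distrib mult_ac)
    also have "\<dots> = 1 / of_nat (n k)"
      by (simp add: cnj_zeta_mult_zeta flip: of_real_mult)
    finally show "cnj (phi n k a (B k b)) * phi n k a (B k b) = 1 / of_nat (n k)" .
  qed simp
  also have "\<dots> = 1"
    using assms(3) by simp
  finally show ?thesis .
qed

lemma Zop_mmul_adj_Zop:
  assumes "1 \<le> k" "k < N" "n (Suc k) \<le> n k" "n k \<ge> 1"
  shows "mmul (Idx N n) (Zop n k) (adj (Zop n k)) = Pk n (Suc k)"
proof (intro ext)
  fix i j
  show "mmul (Idx N n) (Zop n k) (adj (Zop n k)) i j = Pk n (Suc k) i j"
  proof (cases "\<exists>b b'. i = B (Suc k) b \<and> b < n (Suc k) \<and> j = B (Suc k) b' \<and> b' < n (Suc k)")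
    case True
    then obtain b b' where i: "i = B (Suc k) b" "b < n (Suc k)" and j: "j = B (Suc k) b'" "b' < n (Suc k)"
      by blast
    let ?s = "complex_of_real (sqrt (real (n k)))"
    have "mmul (Idx N n) (Zop n k) (adj (Zop n k)) i j
        = (\<Sum>a<n k. Zop n k i (B k a) * cnj (Zop n k j (B k a)))"
      unfolding mmul_def adj_def
    proof (rule sum_Idx_block)
      fix l
      assume "l \<notin> B k ` {..<n k}"
      then show "Zop n k i l * cnj (Zop n k j l) = 0"
        by (cases l) (auto simp: Zop_def i j)
    qed (use assms in auto)
    also have "\<dots> = (\<Sum>a<n k. zeta n k ^ (b * a) * cnj (zeta n k ^ (b' * a))) / (?s * ?s)"
      unfolding sum_divide_distrib
      by (rule sum.cong) (use i j assms in \<open>auto simp: Zop_def\<close>)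
    also have "\<dots> = (if b = b' then 1 else 0)"
      using zeta_orthogonality[of n k b b'] i j assms by (simp flip: of_real_mult)
    also have "\<dots> = Pk n (Suc k) i j"
      using i j by (auto simp: Pk_def)
    finally show ?thesis .
  next
    case False
    then have "Zop n k i l * cnj (Zop n k j l) = 0" for l
      by (cases i; cases j; cases l) (auto simp: Zop_def)
    then have "mmul (Idx N n) (Zop n k) (adj (Zop n k)) i j = 0"
      unfolding mmul_def adj_def by (intro sum.neutral) blast
    moreover have "Pk n (Suc k) i j = 0"
      using False by (auto simp: Pk_def)
    ultimately show ?thesis
      by simp
  qed
qed

lemma commute_rank_one_projections:
  assumes "commute I p (scal c (outer x y))" "commute I p (adj (scal c (outer x y)))"
    and "c \<noteq> 0" "(\<Sum>l\<in>I. cnj (x l) * x l) = 1" "(\<Sum>l\<in>I. cnj (y l) * y l) = 1"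
  shows "commute I p (outer x x)" "commute I p (outer y y)"
proof -
  have "cnj c * c \<noteq> 0"
    using assms(3) by simp
  moreover have "commute I p (mmul I (scal c (outer x y)) (adj (scal c (outer x y))))"
    and "commute I p (mmul I (adj (scal c (outer x y))) (scal c (outer x y)))"
    using assms(1,2) by (simp_all add: commute_mmul)
  ultimately show "commute I p (outer x x)" "commute I p (outer y y)"
    by (simp_all add: mmul_rank_one_adj mmul_adj_rank_one assms(4,5) commute_scal_iff)
qed

lemma Lp_eq_scal_adj_Lm:
  assumes "w \<noteq> OMi" "Gm w \<noteq> 0"
  shows "Lp N n Gp w = scal (complex_of_real (sqrt (Gp w / Gm w))) (adj (Lm N n Gm w))"
proof -
  have "sqrt (Gp w / Gm w) * sqrt (r * Gm w) = sqrt (r * Gp w)" for r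
    using assms(2) by (simp add: real_sqrt_mult[symmetric])
  from this this[of 1] show ?thesis
    using assms by (cases w) (simp_all add: adj_scal adj_outer scal_scal flip: of_real_mult)
qed

lemma commute_Lp:
  assumes "Gm w \<noteq> 0" "commute I p (Lm N n Gm w)" "commute I p (adj (Lm N n Gm w))"
  shows "commute I p (Lp N n Gp w)" "commute I p (adj (Lp N n Gp w))"
proof (atomize (full), cases "w = OMi")
  case True
  then show "commute I p (Lp N n Gp w) \<and> commute I p (adj (Lp N n Gp w))"
    by (simp add: adj_def commute_zero)
next
  case False
  then show "commute I p (Lp N n Gp w) \<and> commute I p (adj (Lp N n Gp w))"
    using assms by (simp add: Lp_eq_scal_adj_Lm adj_scal commute_scal)
qed

lemma commute_Heff:
  assumes "1 \<le> N"
    and "\<forall>k. 1 \<le> k \<and> k < N \<longrightarrow> n (Suc k) \<le> n k"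
    and "\<forall>k. 1 \<le> k \<and> k \<le> N \<longrightarrow> n k \<ge> 1"
    and "\<forall>w\<in>Om N. Gm w > 0"
    and "\<forall>w\<in>Om N. commute (Idx N n) p (Lm N n Gm w) \<and> commute (Idx N n) p (adj (Lm N n Gm w))"
  shows "commute (Idx N n) p (Heff N n gm gp)"
proof -
  let ?I = "Idx N n"
  have OPl: "OPl \<in> Om N" and OMi: "OMi \<in> Om N" and OK: "k \<in> {1..<N} \<Longrightarrow> OK k \<in> Om N" for k
    by (auto simp: Om_def)
  have Lm: "commute ?I p (Lm N n Gm w)" "commute ?I p (adj (Lm N n Gm w))" if "w \<in> Om N" for w
    using assms(5) that by auto
  define c1 where "c1 = complex_of_real (sqrt (real (n 1) * Gm OPl))"
  define cN where "cN = complex_of_real (sqrt (Gm OMi))"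
  have c: "c1 \<noteq> 0" "cN \<noteq> 0"
    using assms OPl OMi by (auto simp: c1_def cN_def)
  have L1: "commute ?I p (scal c1 (outer (phi n 1 0) (ket Pl)))"
    "commute ?I p (adj (scal c1 (outer (phi n 1 0) (ket Pl))))"
    and LN: "commute ?I p (scal cN (outer (ket Mn) (phi n N 0)))"
    "commute ?I p (adj (scal cN (outer (ket Mn) (phi n N 0))))"
    using Lm[OF OPl] Lm[OF OMi] by (simp_all add: c1_def cN_def)
  have "(\<Sum>l\<in>?I. cnj (phi n k 0 l) * phi n k 0 l) = 1" if "k = 1 \<or> k = N" for k
    using that assms(1,3) by (intro phi_inner_self) auto
  then have rank_one: "commute ?I p (outer (phi n 1 0) (phi n 1 0))" "commute ?I p (Pproj Pl)"
    "commute ?I p (outer (phi n N 0) (phi n N 0))" "commute ?I p (Pproj Mn)"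
    using commute_rank_one_projections[OF L1 c(1) _ ket_inner_self[OF Pl_in_Idx finite_Idx]]
      commute_rank_one_projections[OF LN c(2) ket_inner_self[OF Mn_in_Idx finite_Idx]]
    unfolding Pproj_def by auto
  have Zop: "commute ?I p (Zop n k)" "commute ?I p (adj (Zop n k))" if "k \<in> {1..<N}" for k
  proof -
    have "complex_of_real (sqrt (Gm (OK k))) \<noteq> 0"
      using assms(4) OK[OF that] by auto
    then show "commute ?I p (Zop n k)" "commute ?I p (adj (Zop n k))"
      using Lm[OF OK[OF that]] by (simp_all add: adj_scal commute_scal_iff)
  qed
  have "Pk n (Suc k) = mmul ?I (Zop n k) (adj (Zop n k))" if "k \<in> {1..<N}" for k
    using that assms(2,3) by (intro Zop_mmul_adj_Zop[symmetric]) auto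
  then have Zop_products: "commute ?I p (mmul ?I (adj (Zop n k)) (Zop n k))"
    "commute ?I p (Pk n (Suc k))" if "k \<in> {1..<N}" for k
    using Zop[OF that] that by (simp_all add: commute_mmul)
  show ?thesis
    unfolding Heff_def
    by (intro commute_add commute_diff commute_cmul commute_sum rank_one Zop_products)
qed

lemma Lstar_eq_zero_if_commute:
  assumes "commute (Idx N n) p (Heff N n gm gp)"
    and "\<forall>w\<in>Om N. \<forall>L\<in>{Lm N n Gm w, Lp N n Gp w}.
           commute (Idx N n) p L \<and> commute (Idx N n) p (adj L)"
  shows "Lstar N n Gm Gp gm gp p = (\<lambda>i j. 0)"
proof -
  have "Diss (Idx N n) (Lm N n Gm w) p i j + Diss (Idx N n) (Lp N n Gp w) p i j = 0"
    if "w \<in> Om N" for w i j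
    using assms(2) that by (simp add: Diss_eq_zero_if_commute)
  then show ?thesis
    using assms(1) unfolding commute_def Lstar_def by (simp add: fun_eq_iff)
qed

theorem lemma3p2:
  fixes N :: nat and n :: "nat \<Rightarrow> nat" and Gm Gp gm gp :: "om \<Rightarrow> real" and p :: cmat
  assumes "N \<ge> 2"
    and "\<forall>k. 1 \<le> k \<and> k < N \<longrightarrow> n (Suc k) \<le> n k"
    and "\<forall>k. 1 \<le> k \<and> k \<le> N \<longrightarrow> n k \<ge> 1"
    and "\<forall>w\<in>Om N. Gm w > 0 \<and> Gp w > 0"
    and "\<forall>i j. i \<notin> Idx N n \<or> j \<notin> Idx N n \<longrightarrow> p i j = 0"
    and "adj p = p"
    and "\<forall>w\<in>Om N.
           mmul (Idx N n) (Lm N n Gm w) p = mmul (Idx N n) p (mmul (Idx N n) (Lm N n Gm w) p)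
         \<and> mmul (Idx N n) (adj (Lm N n Gm w)) p
             = mmul (Idx N n) p (mmul (Idx N n) (adj (Lm N n Gm w)) p)"
  shows "harmonic N n Gm Gp gm gp p"
proof -
  let ?I = "Idx N n"
  have Lm: "commute ?I p (Lm N n Gm w)" "commute ?I p (adj (Lm N n Gm w))" if "w \<in> Om N" for w
  proof -
    show "commute ?I p (Lm N n Gm w)"
      using assms(7) that by (intro commute_if_reducing[OF assms(6)]) auto
    then show "commute ?I p (adj (Lm N n Gm w))"
      by (rule commute_adj[OF assms(6)])
  qed
  have Gm: "Gm w \<noteq> 0" if "w \<in> Om N" for w
    using assms(4) that by force
  have "\<forall>w\<in>Om N. \<forall>L\<in>{Lm N n Gm w, Lp N n Gp w}. commute ?I p L \<and> commute ?I p (adj L)"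
    by (simp add: Lm Gm commute_Lp[of Gm])
  moreover have "commute ?I p (Heff N n gm gp)"
    using assms(1-4) Lm by (intro commute_Heff[where Gm = Gm]) simp_all
  ultimately have "Lstar N n Gm Gp gm gp p = (\<lambda>i j. 0)"
    by (intro Lstar_eq_zero_if_commute)
  then show ?thesis
    by (rule harmonic_if_Lstar_eq_zero)
qed

end
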